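(* For every integer $k\ge 1$, the set $S_{\ge k}(h)$ has positive density in the set of all rays as $h\to\infty$: $\liminf_{h\to\infty}\frac{|S_{\ge k}(h)|}{N_h}>0$, where $N_h$ is the number of rays $\rho$ with $|\rho|\le h$.
   Context: A ray is a half-line $\rho=\mathbb{R}_{\ge 0}v\subset\mathbb{R}^2$ with $v\in\mathbb{Z}^2\setminus\{0\}$; $u_\rho$ is its primitive lattice generator. On $\mathbb{Z}^2$ use the norm $|(x,y)|=\max\{|x|,|y|\}$, and $|\rho|=|u_\rho|$. $\Sigma_h$ is the complete fan whose rays are all rays $\rho$ with $|\rho|\le h$ and whose $2$-dimensional cones are spanned by angularly consecutive such rays. For $\rho\in\Sigma_h(1)$ with neighbors $\tau,\omega$ in $\Sigma_h$ (adjacent rays in angular order), the singularity index produced by blowing down along $\rho$ is $|\det(u_\tau,u_\omega)|$, equivalently the unique integer $k$ with $u_\tau+u_\omega=k\,u_\rho$. $S_{\ge k}(h)$ is the set of rays $\rho\in\Sigma_h(1)$ for which this index is at least $k$. *)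

theory Defs
  imports "HOL-Analysis.Analysis"
begin

text \<open>A ray is identified with its primitive lattice generator (x,y), gcd x y = 1.\<close>

definition maxnorm :: "int \<times> int \<Rightarrow> int" where
  "maxnorm v = max \<bar>fst v\<bar> \<bar>snd v\<bar>"

definition rays :: "nat \<Rightarrow> (int \<times> int) set" where
  "rays h = {v. gcd (fst v) (snd v) = 1 \<and> maxnorm v \<le> int h}"

definition det2 :: "int \<times> int \<Rightarrow> int \<times> int \<Rightarrow> int" where
  "det2 v w = fst v * snd w - snd v * fst w"

definition ang :: "int \<times> int \<Rightarrow> real" where
  "ang v = Arg (Complex (of_int (fst v)) (of_int (snd v)))"

text \<open>Counterclockwise angle from direction v to direction w, in (0, 2 pi].\<close>
definition ccw_angle :: "int \<times> int \<Rightarrow> int \<times> int \<Rightarrow> real" where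
  "ccw_angle v w = (let d = ang w - ang v in if d > 0 then d else d + 2 * pi)"

definition ccw_succ :: "nat \<Rightarrow> int \<times> int \<Rightarrow> int \<times> int" where
  "ccw_succ h v = (THE w. w \<in> rays h \<and> w \<noteq> v \<and>
      (\<forall>u \<in> rays h - {v}. ccw_angle v w \<le> ccw_angle v u))"

definition ccw_pred :: "nat \<Rightarrow> int \<times> int \<Rightarrow> int \<times> int" where
  "ccw_pred h v = (THE w. w \<in> rays h \<and> w \<noteq> v \<and>
      (\<forall>u \<in> rays h - {v}. ccw_angle w v \<le> ccw_angle u v))"

text \<open>Singularity index from blowing down along rho: |det(u_tau, u_omega)|.\<close>
definition sing_index :: "nat \<Rightarrow> int \<times> int \<Rightarrow> int" where
  "sing_index h v = \<bar>det2 (ccw_pred h v) (ccw_succ h v)\<bar>"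

definition S_ge :: "int \<Rightarrow> nat \<Rightarrow> (int \<times> int) set" where
  "S_ge k h = {v \<in> rays h. sing_index h v \<ge> k}"

definition N_rays :: "nat \<Rightarrow> nat" where
  "N_rays h = card (rays h)"

end

theory Submission
  imports Defs
begin

text \<open>
  Let \<open>v\<close> be primitive with \<open>|v| \<le> m\<close>, and pick a Bezout partner \<open>e\<close> with
  \<open>det(v,e) = 1\<close> and \<open>|e| \<le> |v|\<close>. If \<open>(k+1) m \<le> h\<close>, the primitive vectors
  \<open>k v + e\<close> and \<open>k v - e\<close> lie in \<open>\<Sigma>\<^sub>h\<close>, so the successor \<open>w\<close> of \<open>v\<close> lies in the cone
  spanned by \<open>v\<close> and \<open>k v + e\<close> and the predecessor \<open>u\<close> in the cone spanned by \<open>k v - e\<close>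
  and \<open>v\<close>. The Pluecker relation \<open>det(u,w) = det(u,v) det(w,e) + det(v,w) det(u,e)\<close> then
  forces \<open>det(u,w) \<ge> k\<close>. Hence all rays of \<open>\<Sigma>\<^sub>m\<close>, \<open>m = \<lfloor>h/(k+1)\<rfloor>\<close>, belong to
  \<open>S\<^sub>\<ge>\<^sub>k(h)\<close>; there are at least \<open>m\<^sup>2/4\<close> of them, while \<open>N\<^sub>h \<le> (2h+1)\<^sup>2\<close>.
\<close>

section \<open>Arguments and determinants\<close>

definition cvec :: "int \<times> int \<Rightarrow> complex" where
  "cvec v = Complex (of_int (fst v)) (of_int (snd v))"

lemma cvec_nonzero: "v \<noteq> (0,0) \<Longrightarrow> cmod (cvec v) > 0"
  by (cases v) (auto simp: cvec_def complex_eq_iff)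

lemma cvec_polar:
  assumes "v \<noteq> (0,0)"
  shows "of_int (fst v) = cmod (cvec v) * cos (ang v)"
    and "of_int (snd v) = cmod (cvec v) * sin (ang v)"
proof -
  have z: "cvec v \<noteq> 0" using cvec_nonzero[OF assms] by auto
  have "cis (ang v) = sgn (cvec v)" using cis_Arg[OF z] by (simp add: ang_def cvec_def)
  hence "cos (ang v) = Re (cvec v) / cmod (cvec v)" "sin (ang v) = Im (cvec v) / cmod (cvec v)"
    by (metis Re_sgn Im_sgn cis.sel)+
  with z show "of_int (fst v) = cmod (cvec v) * cos (ang v)"
    and "of_int (snd v) = cmod (cvec v) * sin (ang v)"
    by (simp_all add: cvec_def)
qed

lemma det2_eq_sin:
  assumes "x \<noteq> (0,0)" "y \<noteq> (0,0)"
  shows "of_int (det2 x y) = cmod (cvec x) * cmod (cvec y) * sin (ang y - ang x)"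
  using cvec_polar[OF assms(1)] cvec_polar[OF assms(2)]
  by (simp add: det2_def sin_diff algebra_simps)

lemma inner_eq_cos:
  assumes "x \<noteq> (0,0)" "y \<noteq> (0,0)"
  shows "of_int (fst x * fst y + snd x * snd y) = cmod (cvec x) * cmod (cvec y) * cos (ang y - ang x)"
  using cvec_polar[OF assms(1)] cvec_polar[OF assms(2)]
  by (simp add: cos_diff algebra_simps)

lemma det2_pos_iff:
  assumes "x \<noteq> (0,0)" "y \<noteq> (0,0)"
  shows "det2 x y > 0 \<longleftrightarrow> sin (ang y - ang x) > 0"
proof -
  have "cmod (cvec x) * cmod (cvec y) > 0" using cvec_nonzero assms by simp
  hence "real_of_int (det2 x y) > 0 \<longleftrightarrow> sin (ang y - ang x) > 0"
    unfolding det2_eq_sin[OF assms] using mult_less_cancel_left_pos[of _ 0] by simp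
  thus ?thesis by simp
qed

lemma det2_nonneg_iff:
  assumes "x \<noteq> (0,0)" "y \<noteq> (0,0)"
  shows "det2 x y \<ge> 0 \<longleftrightarrow> sin (ang y - ang x) \<ge> 0"
proof -
  have "cmod (cvec x) * cmod (cvec y) > 0" using cvec_nonzero assms by simp
  hence "real_of_int (det2 x y) \<ge> 0 \<longleftrightarrow> sin (ang y - ang x) \<ge> 0"
    unfolding det2_eq_sin[OF assms] using mult_le_cancel_left_pos[of _ 0] by simp
  thus ?thesis by simp
qed

lemma ccw_angle_cases:
  "ccw_angle a b = ang b - ang a \<or> ccw_angle a b = ang b - ang a + 2*pi"
  "0 < ccw_angle a b" "ccw_angle a b \<le> 2*pi"
  using Arg_bounded[of "cvec a"] Arg_bounded[of "cvec b"]
  by (auto simp: ccw_angle_def ang_def cvec_def Let_def)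

lemma sin_ccw_angle: "sin (ccw_angle a b) = sin (ang b - ang a)"
  using ccw_angle_cases(1)[of a b] by auto

lemma sin_ccw_angle_diff:
  "sin (ccw_angle a b - ccw_angle c d) = sin ((ang b - ang a) - (ang d - ang c))"
proof -
  have periodic: "sin (t - 2*pi) = sin t" for t
    using sin_periodic[of "t - 2*pi"] by simp
  have "ccw_angle a b - ccw_angle c d = (ang b - ang a) - (ang d - ang c) \<or>
    ccw_angle a b - ccw_angle c d = (ang b - ang a) - (ang d - ang c) + 2*pi \<or>
    ccw_angle a b - ccw_angle c d = (ang b - ang a) - (ang d - ang c) - 2*pi"
    using ccw_angle_cases(1)[of a b] ccw_angle_cases(1)[of c d] by linarith
  thus ?thesis by (elim disjE) (simp only: periodic sin_periodic)+
qed

lemma ang_eq_if_ccw_angle_eq: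
  shows "ccw_angle v w1 = ccw_angle v w2 \<Longrightarrow> ang w1 = ang w2"
    and "ccw_angle w1 v = ccw_angle w2 v \<Longrightarrow> ang w1 = ang w2"
  using ccw_angle_cases(1)[of v w1] ccw_angle_cases(1)[of v w2]
    ccw_angle_cases(1)[of w1 v] ccw_angle_cases(1)[of w2 v]
    Arg_bounded[of "cvec w1"] Arg_bounded[of "cvec w2"]
  by (auto simp: ang_def cvec_def)

lemma sin_pos_below_sin_pos:
  fixes \<alpha> \<beta> :: real
  assumes "0 < \<alpha>" "\<alpha> \<le> \<beta>" "\<beta> \<le> 2*pi" "sin \<beta> > 0"
  shows "sin \<alpha> > 0" and "sin (\<beta> - \<alpha>) \<ge> 0"
proof -
  have "\<beta> < pi"
    using assms sin_le_zero[of \<beta>] sin_periodic[of 0] by (cases "\<beta> = 2*pi") force+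
  with assms show "sin \<alpha> > 0" and "sin (\<beta> - \<alpha>) \<ge> 0"
    by (auto intro: sin_gt_zero sin_ge_zero)
qed

section \<open>Neighbouring rays\<close>

lemma primitive_eq_if_parallel:
  fixes a b c d :: int
  assumes "gcd a b = 1" "gcd c d = 1" "a*d - b*c = 0" "a*c + b*d > 0"
  shows "a = c \<and> b = d"
proof -
  have ad: "a*d = b*c" using assms(3) by simp
  have cop: "coprime a b" "coprime b a" "coprime c d" "coprime d c"
    using assms(1,2) by (auto simp: coprime_iff_gcd_eq_1 gcd.commute)
  have "a dvd b*c" by (simp add: ad[symmetric])
  hence "a dvd c" using coprime_dvd_mult_right_iff[OF cop(1)] by simp
  have "c dvd a*d" by (simp add: ad)
  hence "c dvd a" using coprime_dvd_mult_left_iff[OF cop(3)] by simp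
  have "b dvd a*d" by (simp add: ad)
  hence "b dvd d" using coprime_dvd_mult_right_iff[OF cop(2)] by simp
  have "d dvd b*c" by (simp add: ad[symmetric])
  hence "d dvd b" using coprime_dvd_mult_left_iff[OF cop(4)] by simp
  have ac: "\<bar>a\<bar> = \<bar>c\<bar>" using \<open>a dvd c\<close> \<open>c dvd a\<close> by (rule zdvd_antisym_abs)
  have bd: "\<bar>b\<bar> = \<bar>d\<bar>" using \<open>b dvd d\<close> \<open>d dvd b\<close> by (rule zdvd_antisym_abs)
  have c1: "c = a \<or> c = -a" using ac by arith
  have d1: "d = b \<or> d = -b" using bd by arith
  show ?thesis
  proof (cases "c = a")
    case True
    show ?thesis
    proof (cases "d = b")
      case False
      hence d: "d = -b" using d1 by simp
      have "a*b = 0" using ad True d by simp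
      moreover have "a*a - b*b > 0" using assms(4) True d by simp
      ultimately have "b = 0" by auto
      thus ?thesis using True d by simp
    qed (use True in simp)
  next
    case False
    hence c: "c = -a" "a \<noteq> 0" using c1 by auto
    have "a*d = a*(-b)" using ad c by simp
    hence "d = -b" using c(2) by (metis mult_cancel_left)
    hence "a*c + b*d = -(a*a) - b*b" using c by simp
    moreover have "a*a \<ge> 0" "b*b \<ge> 0" by auto
    ultimately show ?thesis using assms(4) by linarith
  qed
qed

lemma primitive_nonzero:
  fixes v :: "int \<times> int"
  shows "gcd (fst v) (snd v) = 1 \<Longrightarrow> v \<noteq> (0,0)"
  by auto

lemma primitive_eq_if_ang_eq:
  assumes x: "gcd (fst x) (snd x) = 1" and y: "gcd (fst y) (snd y) = 1" and "ang x = ang y"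
  shows "x = y"
proof -
  note nz = primitive_nonzero[OF x] primitive_nonzero[OF y]
  have "det2 x y = 0" using det2_eq_sin[OF nz] \<open>ang x = ang y\<close> by simp
  moreover have "real_of_int (fst x * fst y + snd x * snd y) > 0"
    using inner_eq_cos[OF nz] \<open>ang x = ang y\<close> cvec_nonzero[OF nz(1)] cvec_nonzero[OF nz(2)] by simp
  hence "fst x * fst y + snd x * snd y > 0" by (simp only: of_int_0_less_iff)
  ultimately show ?thesis
    using primitive_eq_if_parallel[OF x y] by (simp add: det2_def prod_eq_iff)
qed

lemma finite_rays: "finite (rays h)"
proof -
  have "rays h \<subseteq> {-int h..int h} \<times> {-int h..int h}"
    by (auto simp: rays_def maxnorm_def)
  thus ?thesis by (rule finite_subset) auto
qed

text \<open>The minimiser in the definitions of \<open>ccw_succ\<close> and \<open>ccw_pred\<close> is unique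
  because distinct primitive vectors have distinct arguments.\<close>

lemma ccw_succ_minimal:
  assumes ne: "rays h - {v} \<noteq> {}"
  shows "ccw_succ h v \<in> rays h - {v}"
    and "\<forall>u \<in> rays h - {v}. ccw_angle v (ccw_succ h v) \<le> ccw_angle v u"
proof -
  define w where "w = arg_min_on (ccw_angle v) (rays h - {v})"
  have w: "w \<in> rays h - {v}" "\<forall>u \<in> rays h - {v}. ccw_angle v w \<le> ccw_angle v u"
    using arg_min_if_finite[OF _ ne, of "ccw_angle v"] finite_rays unfolding w_def
    by (auto simp: not_less)
  have "ccw_succ h v = w" unfolding ccw_succ_def
  proof (rule the_equality)
    fix w' assume w': "w' \<in> rays h \<and> w' \<noteq> v \<and> (\<forall>u\<in>rays h - {v}. ccw_angle v w' \<le> ccw_angle v u)"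
    hence "ccw_angle v w' = ccw_angle v w" using w by (meson antisym DiffI singletonD)
    hence "ang w' = ang w" by (rule ang_eq_if_ccw_angle_eq(1))
    with w' w show "w' = w" by (intro primitive_eq_if_ang_eq) (auto simp: rays_def)
  qed (use w in blast)
  with w show "ccw_succ h v \<in> rays h - {v}"
    and "\<forall>u \<in> rays h - {v}. ccw_angle v (ccw_succ h v) \<le> ccw_angle v u" by simp_all
qed

lemma ccw_pred_minimal:
  assumes ne: "rays h - {v} \<noteq> {}"
  shows "ccw_pred h v \<in> rays h - {v}"
    and "\<forall>u \<in> rays h - {v}. ccw_angle (ccw_pred h v) v \<le> ccw_angle u v"
proof -
  define w where "w = arg_min_on (\<lambda>u. ccw_angle u v) (rays h - {v})"
  have w: "w \<in> rays h - {v}" "\<forall>u \<in> rays h - {v}. ccw_angle w v \<le> ccw_angle u v"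
    using arg_min_if_finite[OF _ ne, of "\<lambda>u. ccw_angle u v"] finite_rays unfolding w_def
    by (auto simp: not_less)
  have "ccw_pred h v = w" unfolding ccw_pred_def
  proof (rule the_equality)
    fix w' assume w': "w' \<in> rays h \<and> w' \<noteq> v \<and> (\<forall>u\<in>rays h - {v}. ccw_angle w' v \<le> ccw_angle u v)"
    hence "ccw_angle w' v = ccw_angle w v" using w by (meson antisym DiffI singletonD)
    hence "ang w' = ang w" by (rule ang_eq_if_ccw_angle_eq(2))
    with w' w show "w' = w" by (intro primitive_eq_if_ang_eq) (auto simp: rays_def)
  qed (use w in blast)
  with w show "ccw_pred h v \<in> rays h - {v}"
    and "\<forall>u \<in> rays h - {v}. ccw_angle (ccw_pred h v) v \<le> ccw_angle u v" by simp_all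
qed

lemma det2_ccw_succ:
  assumes v: "v \<in> rays h" and q: "q \<in> rays h" and vq: "det2 v q > 0"
  shows "det2 v (ccw_succ h v) > 0" and "det2 (ccw_succ h v) q \<ge> 0"
proof -
  define w where "w = ccw_succ h v"
  have "q \<noteq> v" using vq by (auto simp: det2_def)
  with q have "rays h - {v} \<noteq> {}" by blast
  note min = ccw_succ_minimal[OF this, folded w_def]
  have nz: "v \<noteq> (0,0)" "q \<noteq> (0,0)" "w \<noteq> (0,0)"
    using v q min(1) by (auto simp: rays_def)
  have "sin (ccw_angle v q) > 0" using det2_pos_iff[OF nz(1,2)] vq sin_ccw_angle by simp
  moreover have "ccw_angle v w \<le> ccw_angle v q" using min(2) q \<open>q \<noteq> v\<close> by blast
  ultimately have "sin (ccw_angle v w) > 0" "sin (ccw_angle v q - ccw_angle v w) \<ge> 0"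
    using sin_pos_below_sin_pos ccw_angle_cases(2,3) by blast+
  thus "det2 v w > 0" "det2 w q \<ge> 0"
    using det2_pos_iff[OF nz(1,3)] det2_nonneg_iff[OF nz(3,2)]
    by (simp_all add: sin_ccw_angle sin_ccw_angle_diff)
qed

lemma det2_ccw_pred:
  assumes v: "v \<in> rays h" and q: "q \<in> rays h" and qv: "det2 q v > 0"
  shows "det2 (ccw_pred h v) v > 0" and "det2 q (ccw_pred h v) \<ge> 0"
proof -
  define w where "w = ccw_pred h v"
  have "q \<noteq> v" using qv by (auto simp: det2_def)
  with q have "rays h - {v} \<noteq> {}" by blast
  note min = ccw_pred_minimal[OF this, folded w_def]
  have nz: "v \<noteq> (0,0)" "q \<noteq> (0,0)" "w \<noteq> (0,0)"
    using v q min(1) by (auto simp: rays_def)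
  have "sin (ccw_angle q v) > 0" using det2_pos_iff[OF nz(2,1)] qv sin_ccw_angle by simp
  moreover have "ccw_angle w v \<le> ccw_angle q v" using min(2) q \<open>q \<noteq> v\<close> by blast
  ultimately have "sin (ccw_angle w v) > 0" "sin (ccw_angle q v - ccw_angle w v) \<ge> 0"
    using sin_pos_below_sin_pos ccw_angle_cases(2,3) by blast+
  thus "det2 w v > 0" "det2 q w \<ge> 0"
    using det2_pos_iff[OF nz(3,1)] det2_nonneg_iff[OF nz(2,3)]
    by (simp_all add: sin_ccw_angle sin_ccw_angle_diff)
qed

section \<open>Rays of large singularity index\<close>

lemma bezout_partner_pos:
  fixes x y :: int
  assumes g: "gcd x y = 1" and xy: "\<bar>y\<bar> \<le> x" and x0: "x > 0"
  obtains e1 e2 where "x*e2 - y*e1 = 1" "\<bar>e1\<bar> \<le> x" "\<bar>e2\<bar> \<le> x"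
proof -
  obtain u w where uw: "u*x + w*y = 1" using bezout_int[of x y] g by auto
  define t where "t = (-w) div x"
  define e1 where "e1 = (-w) mod x"
  define e2 where "e2 = u - t*y"
  have e1: "0 \<le> e1" "e1 < x" using x0 unfolding e1_def by simp_all
  have w: "w = -(t*x + e1)" unfolding t_def e1_def by simp
  have det: "x*e2 - y*e1 = 1"
    unfolding uw[symmetric] e2_def w by (simp add: algebra_simps)
  have "x*\<bar>e2\<bar> = \<bar>1 + y*e1\<bar>" using det x0 by (simp add: abs_mult flip: det)
  also have "\<dots> \<le> 1 + \<bar>y\<bar>*e1" using e1 abs_triangle_ineq[of 1 "y*e1"] by (simp add: abs_mult)
  also have "\<dots> \<le> 1 + x*(x-1)" using xy e1 by (simp add: mult_mono)
  finally have "x*\<bar>e2\<bar> < x*(x+1)" using x0 by (simp add: algebra_simps)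
  hence "\<bar>e2\<bar> \<le> x" using x0 by (simp add: mult_less_cancel_left_pos)
  with e1 show thesis by (intro that[OF det]) auto
qed

lemma bezout_partner_bounded:
  fixes x y :: int
  assumes g: "gcd x y = 1"
  shows "\<exists>e. det2 (x,y) e = 1 \<and> maxnorm e \<le> maxnorm (x,y)"
proof -
  have g': "gcd (-x) (-y) = 1" "gcd y x = 1" "gcd (-y) (-x) = 1"
    using g by (simp_all add: gcd.commute)
  have "(x,y) \<noteq> (0,0)" using g by auto
  then consider "\<bar>y\<bar> \<le> x" "x > 0" | "\<bar>y\<bar> \<le> -x" "-x > 0" | "\<bar>x\<bar> \<le> y" "y > 0"
    | "\<bar>x\<bar> \<le> -y" "-y > 0" by fastforce
  thus ?thesis
  proof cases
    case 1
    then obtain e1 e2 where "x*e2 - y*e1 = 1" "\<bar>e1\<bar> \<le> x" "\<bar>e2\<bar> \<le> x"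
      using bezout_partner_pos[OF g] by blast
    thus ?thesis using 1 by (intro exI[of _ "(e1,e2)"]) (auto simp: det2_def maxnorm_def)
  next
    case 2
    then obtain e1 e2 where "(-x)*e2 - (-y)*e1 = 1" "\<bar>e1\<bar> \<le> -x" "\<bar>e2\<bar> \<le> -x"
      using bezout_partner_pos[OF g'(1)] by (metis abs_minus_cancel)
    thus ?thesis using 2 by (intro exI[of _ "(-e1,-e2)"]) (auto simp: det2_def maxnorm_def)
  next
    case 3
    then obtain f1 f2 where "y*f2 - x*f1 = 1" "\<bar>f1\<bar> \<le> y" "\<bar>f2\<bar> \<le> y"
      using bezout_partner_pos[OF g'(2)] by blast
    thus ?thesis using 3 by (intro exI[of _ "(-f2,-f1)"]) (auto simp: det2_def maxnorm_def)
  next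
    case 4
    then obtain f1 f2 where "(-y)*f2 - (-x)*f1 = 1" "\<bar>f1\<bar> \<le> -y" "\<bar>f2\<bar> \<le> -y"
      using bezout_partner_pos[OF g'(3)] by (metis abs_minus_cancel)
    thus ?thesis using 4 by (intro exI[of _ "(f2,f1)"]) (auto simp: det2_def maxnorm_def)
  qed
qed

lemma det2_pluecker: "det2 u w * det2 v e = det2 u v * det2 w e + det2 v w * det2 u e"
  by (simp add: det2_def algebra_simps)

lemma det2_neighbours_ge:
  fixes k :: int
  assumes k: "k \<ge> 1" and e: "det2 v e = 1" and vw: "det2 v w > 0" and uv: "det2 u v > 0"
    and w: "det2 w (k * fst v + fst e, k * snd v + snd e) \<ge> 0"
    and u: "det2 (k * fst v - fst e, k * snd v - snd e) u \<ge> 0"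
  shows "det2 u w \<ge> k"
proof -
  have "det2 w e \<ge> k * det2 v w" using w by (simp add: det2_def algebra_simps)
  hence "det2 u v * det2 w e \<ge> det2 u v * (k * det2 v w)" using uv by simp
  moreover have "det2 u e \<ge> k * det2 u v" using u by (simp add: det2_def algebra_simps)
  hence "det2 v w * det2 u e \<ge> det2 v w * (k * det2 u v)" using vw by simp
  moreover have "det2 u v * det2 v w \<ge> 1" using uv vw mult_mono[of 1 "det2 u v" 1 "det2 v w"] by simp
  hence "k * (det2 u v * det2 v w) \<ge> k" using k mult_left_mono[of 1 _ k] by simp
  moreover have "det2 v w * (k * det2 u v) \<ge> 0" using k uv vw by simp
  ultimately show ?thesis using det2_pluecker[of u w v e] e by (simp add: algebra_simps)
qed

lemma primitive_if_det2_eq_1: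
  assumes "det2 v w = 1"
  shows "gcd (fst v) (snd v) = 1" and "gcd (fst w) (snd w) = 1"
proof -
  have "gcd (fst v) (snd v) dvd det2 v w" "gcd (fst w) (snd w) dvd det2 v w"
    unfolding det2_def by (simp_all add: dvd_diff)
  with assms show "gcd (fst v) (snd v) = 1" "gcd (fst w) (snd w) = 1"
    by (simp_all add: is_unit_gcd coprime_iff_gcd_eq_1)
qed

lemma rays_subset_S_ge:
  assumes k: "k \<ge> 1" and mh: "(k+1) * int m \<le> int h"
  shows "rays m \<subseteq> S_ge k h"
proof
  fix v assume v: "v \<in> rays m"
  define n where "n = maxnorm v"
  obtain e where e: "det2 v e = 1" "maxnorm e \<le> n"
    using bezout_partner_bounded[of "fst v" "snd v"] v unfolding rays_def n_def by auto
  have "(k+1) * n \<le> (k+1) * int m" using v k unfolding rays_def n_def by simp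
  hence bound: "\<bar>k*a + b\<bar> \<le> int h" "\<bar>k*a - b\<bar> \<le> int h" if "\<bar>a\<bar> \<le> n" "\<bar>b\<bar> \<le> n" for a b
  proof -
    have "\<bar>k*a\<bar> \<le> k*n" using that(1) k by (simp add: abs_mult mult_left_mono)
    thus "\<bar>k*a + b\<bar> \<le> int h" "\<bar>k*a - b\<bar> \<le> int h"
      using that(2) mh \<open>(k+1) * n \<le> (k+1) * int m\<close> by (simp_all add: algebra_simps)
  qed
  have comps: "\<bar>fst v\<bar> \<le> n" "\<bar>snd v\<bar> \<le> n" "\<bar>fst e\<bar> \<le> n" "\<bar>snd e\<bar> \<le> n"
    using e(2) unfolding n_def maxnorm_def by auto
  define q where "q = (k * fst v + fst e, k * snd v + snd e)"
  define q' where "q' = (k * fst v - fst e, k * snd v - snd e)"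
  have dq: "det2 v q = 1" "det2 q' v = 1"
    using e(1) unfolding q_def q'_def det2_def by (simp_all add: algebra_simps)
  hence qh: "q \<in> rays h" and q'h: "q' \<in> rays h"
    using primitive_if_det2_eq_1(2)[of v q] primitive_if_det2_eq_1(1)[of q' v]
      bound[OF comps(1,3)] bound[OF comps(2,4)]
    unfolding rays_def maxnorm_def q_def q'_def by simp_all
  have "int m \<le> (k+1) * int m" using k by (simp add: algebra_simps)
  hence vh: "v \<in> rays h" using v mh by (auto simp: rays_def)
  note succ = det2_ccw_succ[OF vh qh] and pred = det2_ccw_pred[OF vh q'h]
  have "k \<le> det2 (ccw_pred h v) (ccw_succ h v)"
    using det2_neighbours_ge[OF k e(1)] succ pred dq unfolding q_def q'_def by simp
  thus "v \<in> S_ge k h" using vh unfolding S_ge_def sing_index_def by simp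
qed

section \<open>Counting primitive vectors\<close>

lemma sum_inverse_squares_le_aux:
  "m \<ge> 2 \<Longrightarrow> (\<Sum>d=2..m. 1/(real d)^2) \<le> 3/4 - 1/real m"
proof (induction m rule: nat_induct_at_least)
  case base
  then show ?case by simp
next
  case (Suc m)
  have m0: "real m > 0" using Suc.hyps by simp
  have "1/(real (Suc m))^2 \<le> 1/(real m * real (Suc m))"
    using m0 by (intro divide_left_mono) (auto simp: power2_eq_square)
  also have "\<dots> = 1/real m - 1/real (Suc m)" using m0 by (simp add: field_simps)
  finally show ?case using Suc by simp
qed

lemma sum_inverse_squares_le: "(\<Sum>d=2..m. 1/(real d)^2) \<le> 3/4"
proof (cases "m \<ge> 2")
  case True
  have "1/real m \<ge> 0" by simp
  thus ?thesis using sum_inverse_squares_le_aux[OF True] by linarith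
qed simp

lemma card_common_multiples_le:
  assumes "d > 0"
  shows "card {p \<in> {1..m}\<times>{1..m}. d dvd fst p \<and> d dvd snd p} \<le> (m div d)^2"
proof -
  have "{p \<in> {1..m}\<times>{1..m}. d dvd fst p \<and> d dvd snd p} \<subseteq>
        (\<lambda>(i,j). (d*i, d*j)) ` ({1..m div d}\<times>{1..m div d})"
  proof
    fix p assume p: "p \<in> {p \<in> {1..m}\<times>{1..m}. d dvd fst p \<and> d dvd snd p}"
    then obtain i j where ij: "p = (d*i, d*j)" by (auto elim!: dvdE)
    with p assms have "i \<in> {1..m div d}" "j \<in> {1..m div d}"
      by (auto simp: less_eq_div_iff_mult_less_eq mult.commute gr0_conv_Suc)
    with ij show "p \<in> (\<lambda>(i,j). (d*i, d*j)) ` ({1..m div d}\<times>{1..m div d})" by force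
  qed
  hence "card {p \<in> {1..m}\<times>{1..m}. d dvd fst p \<and> d dvd snd p}
      \<le> card ((\<lambda>(i,j). (d*i, d*j)) ` ({1..m div d}\<times>{1..m div d}))"
    by (intro card_mono) auto
  also have "\<dots> \<le> card ({1..m div d}\<times>{1..m div d})" by (rule card_image_le) auto
  also have "\<dots> = (m div d)^2" by (simp add: power2_eq_square)
  finally show ?thesis .
qed

definition coprime_box :: "nat \<Rightarrow> (nat \<times> nat) set" where
  "coprime_box m = {(x,y). x \<in> {1..m} \<and> y \<in> {1..m} \<and> coprime x y}"

lemma not_coprime_box_subset:
  "{1..m}\<times>{1..m} - coprime_box m \<subseteq>
     (\<Union>d\<in>{2..m}. {p \<in> {1..m}\<times>{1..m}. d dvd fst p \<and> d dvd snd p})"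
proof
  fix p assume p: "p \<in> {1..m}\<times>{1..m} - coprime_box m"
  obtain x y where xy: "p = (x,y)" by (cases p)
  have x: "x \<in> {1..m}" "y \<in> {1..m}" "\<not> coprime x y" using p xy unfolding coprime_box_def by auto
  hence "0 < gcd x y" "gcd x y \<le> x" "gcd x y \<noteq> 1"
    by (simp_all add: gcd_le1_nat coprime_iff_gcd_eq_1)
  moreover have "x \<le> m" using x(1) by simp
  ultimately have "2 \<le> gcd x y" "gcd x y \<le> m" by linarith+
  with x xy show "p \<in> (\<Union>d\<in>{2..m}. {p \<in> {1..m}\<times>{1..m}. d dvd fst p \<and> d dvd snd p})"
    by auto
qed

lemma card_coprime_box_ge: "real (card (coprime_box m)) \<ge> (real m)^2 / 4"
proof -
  define B where "B = {1..m}\<times>{1..m}"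
  define D where "D d = {p \<in> B. d dvd fst p \<and> d dvd snd p}" for d
  have sub: "coprime_box m \<subseteq> B" unfolding coprime_box_def B_def by auto
  have "card (B - coprime_box m) \<le> card (\<Union>d\<in>{2..m}. D d)"
    using not_coprime_box_subset by (intro card_mono) (auto simp: B_def D_def)
  also have "\<dots> \<le> (\<Sum>d\<in>{2..m}. card (D d))" by (rule card_UN_le) simp
  finally have "real (card (B - coprime_box m)) \<le> (\<Sum>d\<in>{2..m}. real (card (D d)))"
    by (metis of_nat_le_iff of_nat_sum)
  also have "\<dots> \<le> (\<Sum>d\<in>{2..m}. (real m)^2 * (1/(real d)^2))"
  proof (rule sum_mono)
    fix d assume d: "d \<in> {2..m}"
    have "card (D d) \<le> (m div d)^2"
      unfolding D_def B_def using d by (intro card_common_multiples_le) auto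
    hence "real (card (D d)) \<le> (real (m div d))^2" by (metis of_nat_le_iff of_nat_power)
    also have "\<dots> \<le> (real m / real d)^2"
      using of_nat_div_le_of_nat[of m d] by (intro power_mono) auto
    finally show "real (card (D d)) \<le> (real m)^2 * (1/(real d)^2)" by (simp add: power_divide)
  qed
  also have "\<dots> = (real m)^2 * (\<Sum>d\<in>{2..m}. 1/(real d)^2)" by (rule sum_distrib_left[symmetric])
  also have "\<dots> \<le> (real m)^2 * (3/4)" using sum_inverse_squares_le[of m] by (intro mult_left_mono) auto
  finally have "real (card (B - coprime_box m)) \<le> (real m)^2 * (3/4)" .
  moreover have "m^2 = card (coprime_box m) + card (B - coprime_box m)"
    using card_Diff_subset[OF _ sub] card_mono[OF _ sub] finite_subset[OF sub]
    by (simp add: B_def power2_eq_square)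
  hence "(real m)^2 = real (card (coprime_box m)) + real (card (B - coprime_box m))"
    by (metis of_nat_add of_nat_power)
  ultimately show ?thesis by linarith
qed

lemma card_rays_ge: "real (card (rays m)) \<ge> (real m)^2 / 4"
proof -
  have "(\<lambda>(x,y). (int x, int y)) ` coprime_box m \<subseteq> rays m"
    by (auto simp: coprime_box_def rays_def maxnorm_def coprime_iff_gcd_eq_1 gcd_int_int_eq)
  moreover have "inj_on (\<lambda>(x,y). (int x, int y)) (coprime_box m)" by (auto simp: inj_on_def)
  ultimately have "card (coprime_box m) \<le> card (rays m)"
    using card_inj_on_le finite_rays by blast
  thus ?thesis using card_coprime_box_ge[of m] by linarith
qed

lemma card_rays_le: "card (rays h) \<le> (2*h+1)^2"
proof -
  have "rays h \<subseteq> {-int h..int h} \<times> {-int h..int h}"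
    by (auto simp: rays_def maxnorm_def)
  hence "card (rays h) \<le> card ({-int h..int h} \<times> {-int h..int h})" by (intro card_mono) auto
  also have "\<dots> = (2*h+1)^2"
  proof -
    have "card {-int h..int h} = 2*h+1" by simp
    thus ?thesis by (simp add: card_cartesian_product power2_eq_square)
  qed
  finally show ?thesis .
qed

lemma card_S_ge_quadratic_lower_bound:
  fixes k :: int
  assumes k: "k \<ge> 1" and h: "real h \<ge> 2 * (of_int k + 1)"
  shows "real (card (S_ge k h)) \<ge> (real h)^2 / (16 * (of_int k + 1)^2)"
proof -
  define K where "K = nat (k+1)"
  have K: "int K = k + 1" "real K = of_int k + 1" using k unfolding K_def by simp_all
  define m where "m = h div K"
  have "K * m \<le> h" unfolding m_def by simp
  hence "(k+1) * int m \<le> int h" using K(1) by (metis of_nat_le_iff of_nat_mult)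
  hence "card (rays m) \<le> card (S_ge k h)"
    using rays_subset_S_ge[OF k] finite_rays[of h] by (intro card_mono) (auto simp: S_ge_def)
  hence S: "real (card (S_ge k h)) \<ge> (real m)^2 / 4" using card_rays_ge[of m] by linarith
  have Kpos: "real K > 0" using K(2) k by simp
  have "h mod K < K" using Kpos by simp
  moreover have "h = K * m + h mod K" unfolding m_def by simp
  ultimately have "h < K * (m + 1)" by (simp add: distrib_left)
  hence "real h < real K * (real m + 1)" by (metis of_nat_less_iff of_nat_mult of_nat_add of_nat_1)
  hence "real h / (2 * real K) \<le> real m" using h Kpos K(2) by (simp add: field_simps)
  hence "(real h / (2 * real K))^2 \<le> (real m)^2" by (intro power_mono) auto
  moreover have "(real h)^2 / (16 * (of_int k + 1)^2) = (real h / (2 * real K))^2 / 4"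
    using K(2) by (simp add: power_divide power2_eq_square algebra_simps)
  ultimately show ?thesis using S by linarith
qed

lemma N_rays_le: "h \<ge> 1 \<Longrightarrow> real (N_rays h) \<le> 9 * (real h)^2"
proof -
  assume "h \<ge> 1"
  have "real (N_rays h) \<le> real ((2*h+1)^2)"
    using card_rays_le[of h] unfolding N_rays_def by (simp only: of_nat_le_iff)
  also have "\<dots> = (2 * real h + 1)^2" by simp
  also have "\<dots> \<le> (3 * real h)^2" using \<open>h \<ge> 1\<close> by (intro power_mono) auto
  finally show ?thesis by (simp add: power_mult_distrib)
qed

lemma N_rays_pos: "h \<ge> 1 \<Longrightarrow> N_rays h > 0"
proof -
  assume "h \<ge> 1"
  hence "(1, 0) \<in> rays h" by (simp add: rays_def maxnorm_def)
  thus ?thesis unfolding N_rays_def using finite_rays card_gt_0_iff by blast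
qed

lemma S_ge_density_lower_bound:
  fixes k :: int
  assumes k: "k \<ge> 1" and h: "real h \<ge> 2 * (of_int k + 1)"
  shows "1 / (144 * (of_int k + 1)^2) \<le> real (card (S_ge k h)) / real (N_rays h)"
proof -
  have "real h > 0" using h k by simp
  hence hpos: "real h > 0" "h \<ge> 1" by simp_all
  have "1 / (144 * (of_int k + 1)^2) = ((real h)^2 / (16 * (of_int k + 1)^2)) / (9 * (real h)^2)"
    using hpos by (simp add: field_simps)
  also have "\<dots> \<le> real (card (S_ge k h)) / real (N_rays h)"
    using card_S_ge_quadratic_lower_bound[OF k h] N_rays_le[OF hpos(2)] N_rays_pos[OF hpos(2)] hpos
    by (intro frac_le) auto
  finally show ?thesis .
qed

theorem corollary4p1:
  fixes k :: int
  assumes "k \<ge> 1"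
  shows "liminf (\<lambda>h::nat. ereal (real (card (S_ge k h)) / real (N_rays h))) > 0"
proof -
  define c where "c = 1 / (144 * (real_of_int k + 1)^2)"
  have "eventually (\<lambda>h. real h \<ge> 2 * (of_int k + 1)) sequentially"
  proof (rule eventually_sequentiallyI)
    fix h assume "nat \<lceil>2 * (real_of_int k + 1)\<rceil> \<le> h"
    thus "real h \<ge> 2 * (of_int k + 1)"
      using real_nat_ceiling_ge[of "2 * (real_of_int k + 1)"] of_nat_le_iff by fastforce
  qed
  hence "eventually (\<lambda>h. ereal c \<le> ereal (real (card (S_ge k h)) / real (N_rays h))) sequentially"
    by eventually_elim (use S_ge_density_lower_bound[OF assms] c_def in simp)
  hence "ereal c \<le> liminf (\<lambda>h. ereal (real (card (S_ge k h)) / real (N_rays h)))"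
    by (rule Liminf_bounded)
  moreover have "c > 0" using assms unfolding c_def by simp
  ultimately show ?thesis by (meson ereal_less(2) less_le_trans)
qed

end
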